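(* Let $n\ge 1$ and let $P_n$ be the path on the $n$ vertices $v_1v_2\cdots v_n$. Let $D$ be any dominating set of $P_n$ of minimum cardinality $\gamma(P_n)$, and let $\mathcal{C}_D(P_n)=\sum_{u\in D}\deg_{P_n}(u)$. Then: (i) if $n=3k$ for a positive integer $k$, then $\mathcal{C}_D(P_n)=2k$; (ii) if $n=3k+1$ for an integer $k\ge 0$, then $2k\le \mathcal{C}_D(P_n)\le 2k+2$; (iii) if $n=3k+2$ for an integer $k\ge 0$, then $2k+1\le \mathcal{C}_D(P_n)\le 2k+2$.
   Context: All graphs are finite and simple. A set $D\subseteq V(G)$ is a dominating set of $G$ if every vertex of $V(G)\setminus D$ has a neighbor in $D$. The domination number $\gamma(G)$ is the minimum cardinality of a dominating set, and a dominating set of cardinality $\gamma(G)$ is called a $\gamma$-set. For $D\subseteq V(G)$, the domination cover number (covering number) of $D$ is $\mathcal{C}_D(G)=\sum_{u\in D}\deg_G(u)$. *)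

theory Defs
  imports Main
begin

text \<open>A finite simple graph is given by a finite vertex set V and a symmetric
irreflexive adjacency relation E (only its restriction to V matters).\<close>

definition neighbors :: "'a set \<Rightarrow> ('a \<Rightarrow> 'a \<Rightarrow> bool) \<Rightarrow> 'a \<Rightarrow> 'a set" where
  "neighbors V E u = {w \<in> V. E u w}"

definition degree :: "'a set \<Rightarrow> ('a \<Rightarrow> 'a \<Rightarrow> bool) \<Rightarrow> 'a \<Rightarrow> nat" where
  "degree V E u = card (neighbors V E u)"

definition dominating_set :: "'a set \<Rightarrow> ('a \<Rightarrow> 'a \<Rightarrow> bool) \<Rightarrow> 'a set \<Rightarrow> bool" where
  "dominating_set V E D \<longleftrightarrow> D \<subseteq> V \<and> (\<forall>v \<in> V - D. \<exists>u \<in> D. E v u)"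

definition domination_number :: "'a set \<Rightarrow> ('a \<Rightarrow> 'a \<Rightarrow> bool) \<Rightarrow> nat" where
  "domination_number V E = Min (card ` {D. dominating_set V E D})"

definition gamma_set :: "'a set \<Rightarrow> ('a \<Rightarrow> 'a \<Rightarrow> bool) \<Rightarrow> 'a set \<Rightarrow> bool" where
  "gamma_set V E D \<longleftrightarrow> dominating_set V E D \<and> card D = domination_number V E"

definition cover_number :: "'a set \<Rightarrow> ('a \<Rightarrow> 'a \<Rightarrow> bool) \<Rightarrow> 'a set \<Rightarrow> nat" where
  "cover_number V E D = (\<Sum>u\<in>D. degree V E u)"

definition path_vertices :: "nat \<Rightarrow> nat set" where
  "path_vertices n = {1..n}"

definition path_adj :: "nat \<Rightarrow> nat \<Rightarrow> bool" where
  "path_adj i j \<longleftrightarrow> j = i + 1 \<or> i = j + 1"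

end

theory Submission
  imports Defs
begin

text \<open>Each vertex of a dominating set D covers itself and its neighbours, so
  n \<le> C_D + |D|; each degree in P_n is at most 2, so C_D \<le> 2|D|; and taking every
  third vertex (plus possibly v_n) gives \<gamma>(P_n) \<le> \<lceil>n/3\<rceil>. These three inequalities
  pin down C_D in each residue class of n modulo 3.\<close>

lemma gamma_set_card_le:
  assumes "finite V" "gamma_set V E D" "dominating_set V E D'"
  shows "card D \<le> card D'"
proof -
  have "{D. dominating_set V E D} \<subseteq> Pow V"
    unfolding dominating_set_def by auto
  then have "finite (card ` {D. dominating_set V E D})"
    using \<open>finite V\<close> by (meson finite_Pow_iff finite_imageI finite_subset)
  then have "domination_number V E \<le> card D'"
    unfolding domination_number_def using assms(3) by (intro Min_le) auto
  then show ?thesis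
    using assms(2) unfolding gamma_set_def by simp
qed

lemma cover_number_le_mult_card:
  assumes "\<And>u. u \<in> D \<Longrightarrow> degree V E u \<le> d"
  shows "cover_number V E D \<le> d * card D"
  unfolding cover_number_def using assms sum_bounded_above[of D _ d] by (simp add: mult.commute)

lemma card_le_cover_number_plus_card:
  assumes "finite V" and sym: "\<And>u v. E u v \<Longrightarrow> E v u"
    and "dominating_set V E D"
  shows "card V \<le> cover_number V E D + card D"
proof -
  let ?N = "\<lambda>u. insert u (neighbors V E u)"
  have "D \<subseteq> V"
    using assms(3) unfolding dominating_set_def by simp
  then have "finite D"
    using \<open>finite V\<close> by (rule finite_subset)
  have "V \<subseteq> (\<Union>u\<in>D. ?N u)"
    using assms(3) sym unfolding dominating_set_def neighbors_def by blast
  moreover have "(\<Union>u\<in>D. ?N u) \<subseteq> V"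
    using \<open>D \<subseteq> V\<close> unfolding neighbors_def by auto
  ultimately have "card V \<le> card (\<Union>u\<in>D. ?N u)"
    using \<open>finite V\<close> by (simp add: subset_antisym)
  also have "\<dots> \<le> (\<Sum>u\<in>D. card (?N u))"
    using \<open>finite D\<close> by (rule card_UN_le)
  also have "\<dots> \<le> (\<Sum>u\<in>D. degree V E u + 1)"
  proof (rule sum_mono)
    fix u
    have "finite (neighbors V E u)"
      using \<open>finite V\<close> unfolding neighbors_def by simp
    then show "card (?N u) \<le> degree V E u + 1"
      unfolding degree_def by (simp add: card_insert_if)
  qed
  also have "\<dots> = cover_number V E D + card D"
    unfolding cover_number_def by (simp add: sum_Suc)
  finally show ?thesis .
qed

lemma degree_path_le_2: "degree (path_vertices n) path_adj u \<le> 2"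
proof -
  have "neighbors (path_vertices n) path_adj u \<subseteq> {u + 1, u - 1}"
    unfolding neighbors_def path_adj_def by auto
  then have "degree (path_vertices n) path_adj u \<le> card {u + 1, u - 1}"
    unfolding degree_def by (intro card_mono) auto
  also have "\<dots> \<le> 2"
    by (simp add: card_insert_le_m1)
  finally show ?thesis .
qed

lemma dominating_set_path_every_third:
  assumes "1 \<le> n"
  shows "dominating_set (path_vertices n) path_adj
           ((\<lambda>i. min (3 * i + 2) n) ` {..<(n + 2) div 3})"
    (is "dominating_set _ _ ?D")
proof -
  have near: "\<exists>u\<in>?D. u = v \<or> path_adj v u" if "v \<in> {1..n}" for v
  proof -
    \<comment> \<open>v lies in the block 3i+1, 3i+2, 3i+3, whose middle vertex (or n, if the last
      block is cut short at n = 3i+1 = v) belongs to the set\<close>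
    let ?i = "(v - 1) div 3"
    have "?i < (n + 2) div 3"
      using that by auto
    moreover have "min (3 * ?i + 2) n = v \<or> path_adj v (min (3 * ?i + 2) n)"
      using that unfolding path_adj_def by auto
    ultimately show ?thesis
      by blast
  qed
  have "?D \<subseteq> {1..n}"
    using assms by auto
  then show ?thesis
    using near unfolding dominating_set_def path_vertices_def by fastforce
qed

lemma gamma_set_path_card_le:
  assumes "1 \<le> n" "gamma_set (path_vertices n) path_adj D"
  shows "card D \<le> (n + 2) div 3"
proof -
  have "card D \<le> card ((\<lambda>i. min (3 * i + 2) n) ` {..<(n + 2) div 3})"
    using assms dominating_set_path_every_third
    by (intro gamma_set_card_le) (auto simp: path_vertices_def)
  also have "\<dots> \<le> (n + 2) div 3"
    using card_image_le[of "{..<(n + 2) div 3}"] by simp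
  finally show ?thesis .
qed

theorem mainTheorem1:
  fixes n :: nat and D :: "nat set"
  assumes "n \<ge> 1"
    and "gamma_set (path_vertices n) path_adj D"
  shows "(\<forall>k::nat. k \<ge> 1 \<and> n = 3 * k \<longrightarrow>
            cover_number (path_vertices n) path_adj D = 2 * k)
       \<and> (\<forall>k::nat. n = 3 * k + 1 \<longrightarrow>
            2 * k \<le> cover_number (path_vertices n) path_adj D
            \<and> cover_number (path_vertices n) path_adj D \<le> 2 * k + 2)
       \<and> (\<forall>k::nat. n = 3 * k + 2 \<longrightarrow>
            2 * k + 1 \<le> cover_number (path_vertices n) path_adj D
            \<and> cover_number (path_vertices n) path_adj D \<le> 2 * k + 2)"
proof -
  define C where "C = cover_number (path_vertices n) path_adj D"
  have dom: "dominating_set (path_vertices n) path_adj D"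
    using assms(2) unfolding gamma_set_def by simp
  have gamma: "card D \<le> (n + 2) div 3"
    using assms by (rule gamma_set_path_card_le)
  have upper: "C \<le> 2 * card D"
    unfolding C_def using degree_path_le_2 by (rule cover_number_le_mult_card)
  have lower: "n \<le> C + card D"
    unfolding C_def using card_le_cover_number_plus_card[OF _ _ dom]
    by (simp add: path_vertices_def path_adj_def disj_commute)
  show ?thesis
    unfolding C_def[symmetric]
  proof (intro conjI allI impI)
    fix k
    assume "1 \<le> k \<and> n = 3 * k"
    moreover from this have "(n + 2) div 3 = k"
      by simp
    ultimately show "C = 2 * k"
      using gamma upper lower by linarith
  next
    fix k
    assume "n = 3 * k + 1"
    then show "2 * k \<le> C" "C \<le> 2 * k + 2"
      using gamma upper lower by simp_all
  next
    fix k
    assume "n = 3 * k + 2"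
    then show "2 * k + 1 \<le> C" "C \<le> 2 * k + 2"
      using gamma upper lower by simp_all
  qed
qed

end
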